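(* Let $(Q,\cdot)$ be a left modular magma with a right unit $e$, and let $(Q,\ast)$ be a right modular magma with a left unit $\hat{e}$. Then $(Q,\cdot,\ast)$ is a double magma, i.e. $(x\cdot y)\ast(z\cdot w)=(x\ast z)\cdot(y\ast w)$ for all $x,y,z,w\in Q$, if and only if there is an involutive automorphism $\alpha$ of $(Q,\ast)$ such that $x\ast y=y\cdot\alpha x$ for all $x,y\in Q$.
   Context: A magma $(Q,\cdot)$ is left modular if $x(yz)=z(yx)$ and right modular if $(xy)z=(zy)x$ for all $x,y,z\in Q$. A right unit is an element $r$ with $xr=x$ for all $x$; a left unit is an element $l$ with $lx=x$ for all $x$. A mapping $\alpha:Q\to Q$ is involutive if $\alpha\circ\alpha$ is the identity map. *)

theory Defs
  imports Main
begin

definition left_modular :: "('a \<Rightarrow> 'a \<Rightarrow> 'a) \<Rightarrow> bool" where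
  "left_modular m \<longleftrightarrow> (\<forall>x y z. m x (m y z) = m z (m y x))"

definition right_modular :: "('a \<Rightarrow> 'a \<Rightarrow> 'a) \<Rightarrow> bool" where
  "right_modular m \<longleftrightarrow> (\<forall>x y z. m (m x y) z = m (m z y) x)"

definition right_unit :: "('a \<Rightarrow> 'a \<Rightarrow> 'a) \<Rightarrow> 'a \<Rightarrow> bool" where
  "right_unit m r \<longleftrightarrow> (\<forall>x. m x r = x)"

definition left_unit :: "('a \<Rightarrow> 'a \<Rightarrow> 'a) \<Rightarrow> 'a \<Rightarrow> bool" where
  "left_unit m l \<longleftrightarrow> (\<forall>x. m l x = x)"

definition automorphism :: "('a \<Rightarrow> 'a \<Rightarrow> 'a) \<Rightarrow> ('a \<Rightarrow> 'a) \<Rightarrow> bool" where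
  "automorphism m \<alpha> \<longleftrightarrow> bij \<alpha> \<and> (\<forall>x y. \<alpha> (m x y) = m (\<alpha> x) (\<alpha> y))"

definition involutive :: "('a \<Rightarrow> 'a) \<Rightarrow> bool" where
  "involutive \<alpha> \<longleftrightarrow> \<alpha> \<circ> \<alpha> = id"

definition double_magma :: "('a \<Rightarrow> 'a \<Rightarrow> 'a) \<Rightarrow> ('a \<Rightarrow> 'a \<Rightarrow> 'a) \<Rightarrow> bool" where
  "double_magma dot ast \<longleftrightarrow>
     (\<forall>x y z w. ast (dot x y) (dot z w) = dot (ast x z) (ast y w))"

end

theory Submission
  imports Defs
begin

text \<open>
  In a left modular magma with right unit \<open>e\<close> the map \<open>x \<mapsto> e \<cdot> x\<close> is an involution and
  \<open>e \<cdot> (y \<cdot> x) = x \<cdot> y\<close>; moreover every left modular magma is medial.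
  If \<open>(Q,\<cdot>,\<ast>)\<close> is a double magma, the interchange law with the units shows that \<open>e\<close> is also a
  left unit of \<open>\<ast>\<close>, and then \<open>\<alpha> x = e \<cdot> (x \<ast> e)\<close> satisfies \<open>x \<ast> y = y \<cdot> \<alpha> x\<close>; right
  modularity, in the form \<open>(x \<ast> y) \<ast> e = y \<ast> x\<close>, makes \<open>\<alpha>\<close> an involutive automorphism of \<open>\<ast>\<close>.
  Conversely, such an \<open>\<alpha>\<close> is also an automorphism of \<open>\<cdot>\<close>, because \<open>x \<cdot> y = \<alpha> y \<ast> x\<close>,
  and the interchange law becomes mediality of \<open>\<cdot>\<close>.
\<close>

lemma left_modularD: "left_modular m \<Longrightarrow> m x (m y z) = m z (m y x)"
  unfolding left_modular_def by blast

lemma right_modularD: "right_modular s \<Longrightarrow> s (s x y) z = s (s z y) x"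
  unfolding right_modular_def by blast

lemma right_unitD: "right_unit m e \<Longrightarrow> m x e = x"
  unfolding right_unit_def by blast

lemma left_unitD: "left_unit s e \<Longrightarrow> s e x = x"
  unfolding left_unit_def by blast

lemma double_magmaD: "double_magma m s \<Longrightarrow> s (m x y) (m z w) = m (s x z) (s y w)"
  unfolding double_magma_def by blast

lemma involutiveD: "involutive f \<Longrightarrow> f (f x) = x"
  unfolding involutive_def by (simp add: fun_eq_iff)

lemma left_modular_medial:
  assumes "left_modular m"
  shows "m (m x y) (m z w) = m (m x z) (m y w)"
proof -
  have "m (m x y) (m z w) = m w (m z (m x y))"
    using assms by (rule left_modularD)
  also have "\<dots> = m w (m y (m x z))"
    using assms by (simp only: left_modularD[of m z x y])
  also have "\<dots> = m (m x z) (m y w)"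
    using assms by (rule left_modularD)
  finally show ?thesis .
qed

lemma left_modular_right_unit_swap:
  assumes "left_modular m" and "right_unit m e"
  shows "m e (m y x) = m x y"
  using left_modularD[OF assms(1), of x y e] right_unitD[OF assms(2)] by simp

lemma left_modular_right_unit_involution:
  assumes "left_modular m" and "right_unit m e"
  shows "m e (m e x) = x"
  using left_modular_right_unit_swap[OF assms, of e x] right_unitD[OF assms(2)] by simp

lemma left_modular_right_unit_idem:
  assumes "left_modular m" and "right_unit m e"
  shows "m e e = e"
  using left_modular_right_unit_swap[OF assms, of e e]
    left_modular_right_unit_involution[OF assms, of e] by simp

lemma right_modular_left_unit_swap:
  assumes "right_modular s" and "left_unit s e"
  shows "s (s x y) e = s y x"
  using right_modularD[OF assms(1), of x y e] left_unitD[OF assms(2)] by simp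

lemma double_magma_left_unit:
  assumes "left_modular m" and "right_unit m e" and "left_unit s l" and "double_magma m s"
  shows "left_unit s e"
  unfolding left_unit_def
proof
  fix w
  have "m e w = m e (s e w)"
    using double_magmaD[OF assms(4), of l e e w] right_unitD[OF assms(2)] left_unitD[OF assms(3)]
    by simp
  then have "m e (m e w) = m e (m e (s e w))"
    by simp
  then show "s e w = w"
    using left_modular_right_unit_involution[OF assms(1,2)] by simp
qed

lemma automorphism_if_involutive:
  assumes "involutive \<alpha>" and "\<And>x y. \<alpha> (s x y) = s (\<alpha> x) (\<alpha> y)"
  shows "automorphism s \<alpha>"
  unfolding automorphism_def
  using involuntory_imp_bij[OF involutiveD[OF assms(1)]] assms(2) by blast

definition twist :: "('a \<Rightarrow> 'a \<Rightarrow> 'a) \<Rightarrow> ('a \<Rightarrow> 'a \<Rightarrow> 'a) \<Rightarrow> 'a \<Rightarrow> 'a \<Rightarrow> 'a" where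
  "twist m s e x = m e (s x e)"

context
  fixes dot ast :: "'a \<Rightarrow> 'a \<Rightarrow> 'a" and e :: 'a
  assumes lm: "left_modular dot" and ru: "right_unit dot e"
    and lu: "left_unit ast e" and dm: "double_magma dot ast"
begin

private abbreviation \<alpha> :: "'a \<Rightarrow> 'a" where
  "\<alpha> \<equiv> twist dot ast e"

lemma ast_eq_dot_twist: "ast x y = dot y (\<alpha> x)"
proof -
  have "dot y (\<alpha> x) = dot (ast x e) (dot e y)"
    unfolding twist_def by (rule left_modularD[OF lm])
  also have "\<dots> = dot (ast x e) (ast e (dot e y))"
    by (simp add: left_unitD[OF lu])
  also have "\<dots> = ast (dot x e) (dot e (dot e y))"
    by (rule double_magmaD[OF dm, symmetric])
  also have "\<dots> = ast x y"
    by (simp add: right_unitD[OF ru] left_modular_right_unit_involution[OF lm ru])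
  finally show ?thesis ..
qed

lemma twist_dot_unit: "\<alpha> (dot e y) = ast y e"
proof -
  have "ast (dot e y) e = ast (dot e y) (dot e e)"
    by (simp add: left_modular_right_unit_idem[OF lm ru])
  also have "\<dots> = dot e (ast y e)"
    by (simp add: double_magmaD[OF dm] left_unitD[OF lu])
  finally show ?thesis
    unfolding twist_def by (simp add: left_modular_right_unit_involution[OF lm ru])
qed

context
  assumes rm: "right_modular ast"
begin

lemma twist_involutive: "involutive \<alpha>"
  unfolding involutive_def
proof
  fix x
  have "\<alpha> (\<alpha> x) = ast (ast x e) e"
    unfolding twist_def[of dot ast e x] by (rule twist_dot_unit)
  then show "(\<alpha> \<circ> \<alpha>) x = id x"
    by (simp add: right_modular_left_unit_swap[OF rm lu] left_unitD[OF lu])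
qed

lemma twist_ast: "\<alpha> (ast x y) = ast (\<alpha> x) (\<alpha> y)"
proof -
  have "\<alpha> (ast x y) = dot e (ast y x)"
    unfolding twist_def by (simp add: right_modular_left_unit_swap[OF rm lu])
  also have "\<dots> = dot (\<alpha> y) x"
    by (simp add: ast_eq_dot_twist left_modular_right_unit_swap[OF lm ru])
  also have "\<dots> = ast (\<alpha> x) (\<alpha> y)"
    by (simp add: ast_eq_dot_twist involutiveD[OF twist_involutive])
  finally show ?thesis .
qed

lemma automorphism_twist: "automorphism ast \<alpha>"
  by (rule automorphism_if_involutive[OF twist_involutive]) (rule twist_ast)

end

end

lemma double_magma_if_twisted:
  assumes lm: "left_modular dot" and aut: "automorphism ast \<alpha>" and inv: "involutive \<alpha>"
    and twisted: "\<And>x y. ast x y = dot y (\<alpha> x)"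
  shows "double_magma dot ast"
  unfolding double_magma_def
proof (intro allI)
  fix x y z w
  have hom: "\<alpha> (ast u v) = ast (\<alpha> u) (\<alpha> v)" for u v
    using aut unfolding automorphism_def by blast
  have "\<alpha> (dot x y) = \<alpha> (ast (\<alpha> y) x)"
    by (simp add: twisted involutiveD[OF inv])
  also have "\<dots> = dot (\<alpha> x) (\<alpha> y)"
    unfolding hom involutiveD[OF inv] by (rule twisted)
  finally have hom_dot: "\<alpha> (dot x y) = dot (\<alpha> x) (\<alpha> y)" .
  have "ast (dot x y) (dot z w) = dot (dot z w) (dot (\<alpha> x) (\<alpha> y))"
    by (simp add: twisted hom_dot)
  also have "\<dots> = dot (ast x z) (ast y w)"
    by (simp add: left_modular_medial[OF lm] twisted)
  finally show "ast (dot x y) (dot z w) = dot (ast x z) (ast y w)" .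
qed

theorem theorem5p4:
  fixes dot :: "'a \<Rightarrow> 'a \<Rightarrow> 'a" and ast :: "'a \<Rightarrow> 'a \<Rightarrow> 'a" and e e' :: 'a
  assumes "left_modular dot" and "right_unit dot e"
    and "right_modular ast" and "left_unit ast e'"
  shows "double_magma dot ast \<longleftrightarrow>
         (\<exists>\<alpha>. automorphism ast \<alpha> \<and> involutive \<alpha> \<and> (\<forall>x y. ast x y = dot y (\<alpha> x)))"
proof
  assume dm: "double_magma dot ast"
  have lu: "left_unit ast e"
    using double_magma_left_unit[OF assms(1,2,4) dm] .
  show "\<exists>\<alpha>. automorphism ast \<alpha> \<and> involutive \<alpha> \<and> (\<forall>x y. ast x y = dot y (\<alpha> x))"
    by (intro exI[of _ "twist dot ast e"] conjI allI automorphism_twist[OF assms(1,2) lu dm assms(3)]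
        twist_involutive[OF assms(1,2) lu dm assms(3)] ast_eq_dot_twist[OF assms(1,2) lu dm])
next
  assume "\<exists>\<alpha>. automorphism ast \<alpha> \<and> involutive \<alpha> \<and> (\<forall>x y. ast x y = dot y (\<alpha> x))"
  then show "double_magma dot ast"
    using double_magma_if_twisted[OF assms(1)] by blast
qed

end
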